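(* Assume [Existence] (see context). Let $\omega^*$ be a realization of some $P\in\mathcal{G}^{\delta^*,\theta^*}$ with $\delta^*\in I$, $\theta^*\in\mathcal{K}$, and let $\tilde\delta_n=\min_{\{x,y\}\subset\omega^*_{\Lambda_n},x\ne y}|x-y|$. Then the MLE of the hardcore parameter is $\hat\delta_n=\tilde\delta_n$ if $\tilde\delta_n\in I$ and $\hat\delta_n=\delta_{\max}$ otherwise; consequently $\hat\theta_n=\mathrm{argmin}_{\theta\in\mathcal{K}}K^{\hat\delta_n,\theta}_n(\omega^*_{\Lambda_n})$.
   Context: Setting: $I=[\delta_{\min},\delta_{\max}]$, $0\le\delta_{\min}\le\delta_{\max}\le\infty$; $\emptyset\ne\Theta\subset\mathbb{R}^p$; $\mathcal{K}\subset\Theta$ compact. Configurations are locally finite subsets of $\mathbb{R}^d$; $\omega_\Lambda=\omega\cap\Lambda$; $\pi_\Lambda$ is the unit-intensity Poisson process on bounded $\Lambda$; $\Lambda_n=[-n,n]^d$, $|\Lambda|$ Lebesgue measure; $\Omega_T$ is the set of tempered configurations $\{\omega:\exists t>0\ \forall n\ge1,\sum_{i\in\{-n,\dots,n-1\}^d}N_{i+[0,1]^d}(\omega)^2\le t(2n)^d\}$; $\Omega^\delta_\infty=\{\omega:\inf_{x\ne y\in\omega}|x-y|\ge\delta\}$. For each $\theta\in\Theta$, $(H^\theta_\Lambda)_\Lambda$ are finite-valued measurable energies on $\Omega_T$ satisfying $H^\theta_{\Lambda'}(\omega)=H^\theta_\Lambda(\omega)+\varphi_{\Lambda,\Lambda'}(\omega_{\Lambda^c})$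 for $\Lambda\subset\Lambda'$. Conditional densities $f^{\delta,\theta}_\Lambda(\omega)=e^{-H^\theta_\Lambda(\omega)}\mathbb{1}_{\Omega^\delta_\infty}(\omega)/Z^{\delta,\theta}_\Lambda(\omega_{\Lambda^c})$, with $Z^{\delta,\theta}_\Lambda(\omega_{\Lambda^c})=\int e^{-H^\theta_\Lambda(\omega'_\Lambda\cup\omega_{\Lambda^c})}\mathbb{1}_{\Omega^\delta_\infty}(\omega'_\Lambda\cup\omega_{\Lambda^c})\pi_\Lambda(d\omega'_\Lambda)$; $\mathcal{G}^{\delta,\theta}$ is the set of stationary probability measures $P$ with finite intensity, $P(\Omega^\delta_\infty\cap\Omega_T)=1$, satisfying the DLR equations $\int g\,dP=\iint g(\omega'_\Lambda\cup\omega_{\Lambda^c})f^{\delta,\theta}_\Lambda(\omega'_\Lambda\cup\omega_{\Lambda^c})\pi_\Lambda(d\omega'_\Lambda)P(d\omega)$. [Existence]: for all $\delta\in I,\theta\in\Theta$, bounded $\Lambda$ and $\omega\in\Omega^\delta_\infty\cap\Omega_T$, $Z^{\delta,\theta}_\Lambda(\omega_{\Lambda^c})<\infty$, and $\mathcal{G}^{\delta,\theta}\ne\emptyset$. Free-boundary partition function $Z^{\delta,\theta}_\Lambda=\int e^{-H^\theta_\Lambda(\omega_\Lambda)}\mathbb{1}_{\Omega^\delta_\infty}(\omega_\Lambda)\pi_\Lambda(d\omega_\Lambda)$. The MLE is $(\hat\delta_n,\hat\theta_n)=\mathrm{argmin}_{(\delta,\theta)\in I\times\mathcal{K}}K^{\delta,\theta}_n(\omega^*_{\Lambda_n})$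 (equivalently the argmax of the free-boundary likelihood $e^{-H^\theta_{\Lambda_n}(\omega^*_{\Lambda_n})}\mathbb{1}_{\Omega^\delta_\infty}(\omega^*_{\Lambda_n})/Z^{\delta,\theta}_{\Lambda_n}$), with contrast $K^{\delta,\theta}_n(\omega_{\Lambda_n})=\frac{\ln Z^{\delta,\theta}_{\Lambda_n}}{|\Lambda_n|}+\frac{H^\theta_{\Lambda_n}(\omega_{\Lambda_n})}{|\Lambda_n|}+\infty\cdot\mathbb{1}_{\tilde\delta_n(\omega_{\Lambda_n})<\delta}$. *)

theory Defs
  imports "HOL-Analysis.Analysis" "HOL-Probability.Probability"
begin

text \<open>Configurations are subsets of the Euclidean space 'a (dimension d = DIM('a)).\<close>

definition locfin :: "'a::euclidean_space set set" where
  "locfin = {\<omega>. \<forall>B. bounded B \<longrightarrow> finite (\<omega> \<inter> B)}"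

definition bwin :: "'a::euclidean_space set \<Rightarrow> bool" where
  "bwin \<Lambda> \<longleftrightarrow> \<Lambda> \<in> sets lborel \<and> bounded \<Lambda>"

definition config_space :: "'a::euclidean_space set measure" where
  "config_space = sigma locfin
     {{\<omega> \<in> locfin. card (\<omega> \<inter> B) = k} | B k. bwin B}"

text \<open>Integral against the unit-intensity Poisson process pi_Lambda on a bounded window.\<close>
definition pois_int :: "'a::euclidean_space set \<Rightarrow> ('a set \<Rightarrow> ennreal) \<Rightarrow> ennreal" where
  "pois_int \<Lambda> f = (\<Sum>n. ennreal (exp (- measure lborel \<Lambda>) / fact n) *
      (\<integral>\<^sup>+ x. f (x ` {..<n}) \<partial>(PiM {..<n} (\<lambda>_. restrict_space lborel \<Lambda>))))"

definition Lam :: "nat \<Rightarrow> 'a::euclidean_space set" where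
  "Lam n = cbox (- (real n *\<^sub>R One)) (real n *\<^sub>R One)"

definition lattice_pts :: "nat \<Rightarrow> 'a::euclidean_space set" where
  "lattice_pts n = {i. \<forall>b\<in>Basis. i \<bullet> b \<in> \<int> \<and> - real n \<le> i \<bullet> b \<and> i \<bullet> b \<le> real n - 1}"

definition tempered :: "'a::euclidean_space set set" where
  "tempered = {\<omega> \<in> locfin. \<exists>t>0. \<forall>n\<ge>1.
     (\<Sum>i\<in>lattice_pts n. (real (card (\<omega> \<inter> cbox i (i + One))))\<^sup>2)
       \<le> t * (2 * real n) ^ DIM('a)}"

definition hardcore :: "ereal \<Rightarrow> 'a::euclidean_space set set" where
  "hardcore \<delta> = {\<omega> \<in> locfin. \<forall>x\<in>\<omega>. \<forall>y\<in>\<omega>. x \<noteq> y \<longrightarrow> \<delta> \<le> ereal (dist x y)}"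

definition Zc :: "('p \<Rightarrow> 'a set \<Rightarrow> 'a set \<Rightarrow> real) \<Rightarrow> ereal \<Rightarrow> 'p \<Rightarrow> 'a::euclidean_space set
      \<Rightarrow> 'a set \<Rightarrow> ennreal" where
  "Zc H \<delta> \<theta> \<Lambda> \<omega> = pois_int \<Lambda> (\<lambda>\<omega>'.
      ennreal (exp (- H \<theta> \<Lambda> ((\<omega>' \<inter> \<Lambda>) \<union> (\<omega> - \<Lambda>)))) *
      (if (\<omega>' \<inter> \<Lambda>) \<union> (\<omega> - \<Lambda>) \<in> hardcore \<delta> then 1 else 0))"

definition fc :: "('p \<Rightarrow> 'a set \<Rightarrow> 'a set \<Rightarrow> real) \<Rightarrow> ereal \<Rightarrow> 'p \<Rightarrow> 'a::euclidean_space set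
      \<Rightarrow> 'a set \<Rightarrow> ennreal" where
  "fc H \<delta> \<theta> \<Lambda> \<omega> =
     ennreal (exp (- H \<theta> \<Lambda> \<omega>)) * (if \<omega> \<in> hardcore \<delta> then 1 else 0)
       / Zc H \<delta> \<theta> \<Lambda> \<omega>"

text \<open>The set G^{delta,theta} of stationary Gibbs measures (DLR stated for nonnegative
  measurable test functions).\<close>
definition Gibbs :: "('p \<Rightarrow> 'a set \<Rightarrow> 'a set \<Rightarrow> real) \<Rightarrow> ereal \<Rightarrow> 'p
      \<Rightarrow> 'a::euclidean_space set measure set" where
  "Gibbs H \<delta> \<theta> = {P. prob_space P \<and> sets P = sets config_space \<and>
     (\<forall>x::'a. distr P config_space (\<lambda>\<omega>. (\<lambda>y. y + x) ` \<omega>) = P) \<and>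
     (\<integral>\<^sup>+ \<omega>. ennreal (real (card (\<omega> \<inter> cbox 0 One))) \<partial>P) < \<infinity> \<and>
     (AE \<omega> in P. \<omega> \<in> hardcore \<delta> \<inter> tempered) \<and>
     (\<forall>\<Lambda>. bwin \<Lambda> \<longrightarrow> (\<forall>g \<in> borel_measurable config_space.
        (\<integral>\<^sup>+ \<omega>. g \<omega> \<partial>P) =
        (\<integral>\<^sup>+ \<omega>. pois_int \<Lambda> (\<lambda>\<omega>'. g ((\<omega>' \<inter> \<Lambda>) \<union> (\<omega> - \<Lambda>)) *
                 fc H \<delta> \<theta> \<Lambda> ((\<omega>' \<inter> \<Lambda>) \<union> (\<omega> - \<Lambda>))) \<partial>P)))}"

definition Zf :: "('p \<Rightarrow> 'a set \<Rightarrow> 'a set \<Rightarrow> real) \<Rightarrow> ereal \<Rightarrow> 'p \<Rightarrow> 'a::euclidean_space set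
      \<Rightarrow> ennreal" where
  "Zf H \<delta> \<theta> \<Lambda> = pois_int \<Lambda> (\<lambda>\<omega>'.
      ennreal (exp (- H \<theta> \<Lambda> (\<omega>' \<inter> \<Lambda>))) *
      (if \<omega>' \<inter> \<Lambda> \<in> hardcore \<delta> then 1 else 0))"

text \<open>Minimal interpoint distance of omega in Lambda_n (+infinity if fewer than two points).\<close>
definition mindist :: "nat \<Rightarrow> 'a::euclidean_space set \<Rightarrow> ereal" where
  "mindist n \<omega> = Inf {ereal (dist x y) | x y. x \<in> \<omega> \<inter> Lam n \<and> y \<in> \<omega> \<inter> Lam n \<and> x \<noteq> y}"

definition contrast :: "('p \<Rightarrow> 'a set \<Rightarrow> 'a set \<Rightarrow> real) \<Rightarrow> nat \<Rightarrow> ereal \<Rightarrow> 'p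
      \<Rightarrow> 'a::euclidean_space set \<Rightarrow> ereal" where
  "contrast H n \<delta> \<theta> \<omega> =
     ereal (ln (enn2real (Zf H \<delta> \<theta> (Lam n))) / measure lborel (Lam n :: 'a set)
            + H \<theta> (Lam n) (\<omega> \<inter> Lam n) / measure lborel (Lam n :: 'a set))
     + (if mindist n \<omega> < \<delta> then \<infinity> else 0)"

definition delta_hat :: "ereal \<Rightarrow> ereal \<Rightarrow> nat \<Rightarrow> 'a::euclidean_space set \<Rightarrow> ereal" where
  "delta_hat dmin dmax n \<omega> =
     (if mindist n \<omega> \<in> {dmin..dmax} then mindist n \<omega> else dmax)"

end

theory Submission
  imports Defs
begin

text \<open>For fixed \<open>\<theta>\<close>, the contrast depends on \<open>\<delta>\<close> only through \<open>ln Z(\<delta>, \<theta>)\<close>, which is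
  nonincreasing in \<open>\<delta>\<close> because the hardcore event shrinks, and through the infinite penalty
  for \<open>\<delta>\<close> above the observed minimal distance \<open>\<delta>\<^sub>n\<close>. Hence the largest admissible \<open>\<delta> \<le> \<delta>\<^sub>n\<close>
  minimises the contrast for every \<open>\<theta>\<close>, and the profile in \<open>\<theta>\<close> is taken at that \<open>\<delta>\<close>.
  The minimiser is unique as soon as two points are observed: the two-point term of the Poisson
  expansion of \<open>Z\<close> then loses a set of pairs of positive Lebesgue measure whenever \<open>\<delta>\<close> increases,
  so \<open>Z\<close> decreases strictly. Almost surely the observed configuration is
  \<open>\<delta>\<^sup>*\<close>-hardcore, so \<open>\<delta>\<^sub>n \<ge> \<delta>\<^sup>* \<ge> \<delta>\<^sub>m\<^sub>i\<^sub>n\<close> and the admissible set is nonempty.\<close>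

section \<open>Finite configurations are tempered\<close>

lemma lattice_pts_subset_image:
  "lattice_pts n \<subseteq> (\<lambda>f. \<Sum>b\<in>Basis. of_int (f b) *\<^sub>R b) `
     PiE (Basis :: 'a::euclidean_space set) (\<lambda>_. {- int n..int n - 1})"
proof
  fix i :: 'a assume i: "i \<in> lattice_pts n"
  define f where "f b = (if b \<in> Basis then \<lfloor>i \<bullet> b\<rfloor> else undefined)" for b :: 'a
  have fb: "of_int (f b) = i \<bullet> b" if "b \<in> Basis" for b
    using i that unfolding lattice_pts_def f_def by (auto elim!: Ints_cases)
  have "- int n \<le> f b \<and> f b \<le> int n - 1" if b: "b \<in> Basis" for b
  proof -
    have "- real n \<le> i \<bullet> b" "i \<bullet> b \<le> real n - 1" using i b unfolding lattice_pts_def by auto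
    then show ?thesis using fb[OF b] by linarith
  qed
  then have "f \<in> PiE Basis (\<lambda>_. {- int n..int n - 1})"
    unfolding f_def by (auto simp: PiE_def extensional_def)
  moreover have "i = (\<Sum>b\<in>Basis. of_int (f b) *\<^sub>R b)"
    using fb by (simp add: euclidean_representation)
  ultimately show "i \<in> (\<lambda>f. \<Sum>b\<in>Basis. of_int (f b) *\<^sub>R b) ` PiE Basis (\<lambda>_. {- int n..int n - 1})"
    by blast
qed

lemma card_lattice_pts_le: "card (lattice_pts n :: 'a::euclidean_space set) \<le> (2 * n) ^ DIM('a)"
proof -
  let ?P = "PiE (Basis :: 'a set) (\<lambda>_. {- int n..int n - 1})"
  have "card (lattice_pts n :: 'a set) \<le> card ((\<lambda>f. \<Sum>b\<in>Basis. of_int (f b) *\<^sub>R b) ` ?P)"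
    using lattice_pts_subset_image by (rule card_mono[rotated]) (simp add: finite_PiE)
  also have "\<dots> \<le> card ?P" by (rule card_image_le) (simp add: finite_PiE)
  also have "\<dots> = (2 * n) ^ DIM('a)" by (simp add: card_PiE nat_mult_distrib)
  finally show ?thesis .
qed

lemma finite_imp_tempered:
  assumes "finite (\<omega> :: 'a::euclidean_space set)"
  shows "\<omega> \<in> tempered"
proof -
  define t where "t = (real (card \<omega>))\<^sup>2 + 1"
  have "(\<Sum>i\<in>lattice_pts n. (real (card (\<omega> \<inter> cbox i (i + One))))\<^sup>2) \<le> t * (2 * real n) ^ DIM('a)"
    for n
  proof -
    have "(real (card (\<omega> \<inter> cbox i (i + One))))\<^sup>2 \<le> t" for i :: 'a
    proof -
      have "card (\<omega> \<inter> cbox i (i + One)) \<le> card \<omega>" using assms by (simp add: card_mono)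
      then have "(real (card (\<omega> \<inter> cbox i (i + One))))\<^sup>2 \<le> (real (card \<omega>))\<^sup>2"
        by (intro power_mono) auto
      then show ?thesis unfolding t_def by linarith
    qed
    then have "(\<Sum>i\<in>lattice_pts n. (real (card (\<omega> \<inter> cbox i (i + One))))\<^sup>2)
        \<le> real (card (lattice_pts n :: 'a set)) * t"
      using sum_bounded_above[of "lattice_pts n" "\<lambda>i. (real (card (\<omega> \<inter> cbox i (i + One))))\<^sup>2" t]
      by simp
    also have "\<dots> \<le> real ((2 * n) ^ DIM('a)) * t"
      using card_lattice_pts_le[where 'a='a, of n] unfolding t_def
      by (intro mult_right_mono) (simp_all only: of_nat_le_iff, simp)
    finally show ?thesis by (simp add: mult.commute)
  qed
  moreover have "\<omega> \<in> locfin" using assms unfolding locfin_def by auto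
  moreover have "t > 0" unfolding t_def by (simp add: add_nonneg_pos)
  ultimately show ?thesis unfolding tempered_def by blast
qed

section \<open>Two-point configurations\<close>

lemma measurable_component_restrict_lborel:
  assumes "i \<in> I"
  shows "(\<lambda>x. x i) \<in> borel_measurable (PiM I (\<lambda>_. restrict_space lborel (L::'a::euclidean_space set)))"
proof -
  have "(\<lambda>x. x i) \<in> measurable (PiM I (\<lambda>_. restrict_space lborel L)) (restrict_space lborel L)"
    using assms by (rule measurable_component_singleton)
  moreover have "(\<lambda>x. x) \<in> measurable (restrict_space lborel L) borel"
    by (intro measurable_restrict_space1) simp
  ultimately show ?thesis using measurable_compose by blast
qed

lemma card_doubleton_Int:
  "card ({a, b} \<inter> B) = (if a = b then (if a \<in> B then 1 else 0)
      else (if a \<in> B then 1 else 0) + (if b \<in> B then 1 else (0::nat)))"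
  by (cases "a \<in> B"; cases "b \<in> B"; cases "a = b") (auto simp: Int_insert_left)

lemma measurable_doubleton_config:
  "(\<lambda>x. {x 0, x 1}) \<in> measurable (PiM {..<2::nat} (\<lambda>_. restrict_space lborel (L::'a::euclidean_space set)))
     (restrict_space config_space tempered)"
proof (rule measurable_restrict_space2)
  let ?M = "PiM {..<2::nat} (\<lambda>_. restrict_space lborel L)"
  show "(\<lambda>x. {x 0, x 1}) \<in> space ?M \<rightarrow> tempered"
    by (auto intro!: finite_imp_tempered)
  note [measurable] = measurable_component_restrict_lborel[of 0 "{..<2}" L]
    measurable_component_restrict_lborel[of 1 "{..<2}" L]
  show "(\<lambda>x. {x 0, x 1}) \<in> measurable ?M config_space"
    unfolding config_space_def
  proof (rule measurable_measure_of)
    show "{{\<omega> \<in> locfin. card (\<omega> \<inter> B) = k} | B k. bwin B} \<subseteq> Pow locfin" by auto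
    show "(\<lambda>x. {x 0, x 1}) \<in> space ?M \<rightarrow> locfin" unfolding locfin_def by auto
    fix y :: "'a set set" assume "y \<in> {{\<omega> \<in> locfin. card (\<omega> \<inter> B) = k} | B k. bwin B}"
    then obtain B k where y: "y = {\<omega> \<in> locfin. card (\<omega> \<inter> B) = k}" and "bwin B" by auto
    then have [measurable]: "B \<in> sets borel" unfolding bwin_def by simp
    have "(\<lambda>x. {x 0, x 1}) -` y \<inter> space ?M =
       {x \<in> space ?M. (if x 0 = x 1 then (if x 0 \<in> B then 1 else 0)
      else (if x 0 \<in> B then 1 else 0) + (if x 1 \<in> B then 1 else (0::nat))) = k}"
      unfolding y card_doubleton_Int[symmetric] by (auto simp: locfin_def)
    also have "\<dots> \<in> sets ?M" by measurable
    finally show "(\<lambda>x. {x 0, x 1}) -` y \<inter> space ?M \<in> sets ?M" .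
  qed
qed

lemma doubleton_in_hardcore_iff: "{a, b} \<in> hardcore \<delta> \<longleftrightarrow> a = b \<or> \<delta> \<le> ereal (dist a b)"
  unfolding hardcore_def locfin_def by (auto simp: dist_commute)

section \<open>Poisson integrals and partition functions\<close>

lemma ennreal_suminf_strict_mono:
  fixes f g :: "nat \<Rightarrow> ennreal"
  assumes le: "\<And>i. f i \<le> g i" and lt: "f k < g k" and fin: "suminf f < \<infinity>"
  shows "suminf f < suminf g"
proof -
  define d where "d i = g i - f i" for i
  have g: "g i = f i + d i" for i
    unfolding d_def using le[of i] by (simp add: add_diff_inverse_ennreal)
  have "suminf g = suminf f + suminf d" unfolding g by (simp add: suminf_add)
  moreover have "0 < d k" unfolding d_def using lt by (rule diff_gr0_ennreal)
  moreover have "d k \<le> suminf d"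
    using ennreal_suminf_lessD[of d "d k" k] by (meson not_le order.irrefl)
  ultimately show ?thesis using fin
    by (metis add.right_neutral dual_order.strict_trans1 ennreal_add_left_cancel_less less_le
        top.not_eq_extremum)
qed

lemma pois_int_mono:
  assumes "\<And>\<omega>. f \<omega> \<le> g \<omega>"
  shows "pois_int L f \<le> pois_int L g"
  unfolding pois_int_def
  by (intro suminf_le summableI mult_left_mono nn_integral_mono assms) auto

text \<open>The hypothesis is a gap \<open>D\<close> rather than a strict inequality because the finiteness of the
  \<open>k\<close>-th integral of \<open>f\<close>, needed to turn the gap into strictness in \<open>ennreal\<close>, follows from
  \<open>fin\<close> only inside the proof.\<close>

lemma pois_int_strict_mono:
  fixes L :: "'a::euclidean_space set" and k :: nat
  assumes le: "\<And>\<omega>. f \<omega> \<le> g \<omega>" and fin: "pois_int L f < \<infinity>" and D: "0 < D"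
    and gap: "(\<integral>\<^sup>+ x. f (x ` {..<k}) \<partial>PiM {..<k} (\<lambda>_. restrict_space lborel L)) + D
      \<le> (\<integral>\<^sup>+ x. g (x ` {..<k}) \<partial>PiM {..<k} (\<lambda>_. restrict_space lborel L))"
  shows "pois_int L f < pois_int L g"
proof -
  define c where "c j = ennreal (exp (- measure lborel L) / fact j)" for j
  define I where "I h j = (\<integral>\<^sup>+ x. h (x ` {..<j}) \<partial>PiM {..<j} (\<lambda>_. restrict_space lborel L))"
    for h :: "'a set \<Rightarrow> ennreal" and j :: nat
  have pois: "pois_int L h = (\<Sum>j. c j * I h j)" for h unfolding pois_int_def c_def I_def ..
  have c: "0 < c j" "c j < top" for j unfolding c_def by simp_all
  have "c k * I f k < \<infinity>" using fin unfolding pois by (rule ennreal_suminf_lessD)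
  then have "I f k < \<infinity>" using c[of k] by (auto simp: ennreal_mult_less_top)
  then have "I f k + 0 < I f k + D" using D by (simp add: ennreal_add_left_cancel_less)
  also have "\<dots> \<le> I g k" using gap unfolding I_def .
  finally have "I f k < I g k" by simp
  then have "c k * I f k < c k * I g k" using c by (intro ennreal_mult_strict_left_mono)
  moreover have "c j * I f j \<le> c j * I g j" for j
    unfolding I_def by (intro mult_left_mono nn_integral_mono le) simp
  ultimately show ?thesis using fin unfolding pois by (intro ennreal_suminf_strict_mono)
qed

lemma hardcore_antimono: "\<delta> \<le> \<delta>' \<Longrightarrow> hardcore \<delta>' \<subseteq> hardcore \<delta>"
  unfolding hardcore_def by (auto intro: order_trans)

lemma Zf_antimono: "\<delta> \<le> \<delta>' \<Longrightarrow> Zf H \<delta>' \<theta> L \<le> Zf H \<delta> \<theta> L"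
  unfolding Zf_def
  by (intro pois_int_mono) (use hardcore_antimono in \<open>auto intro!: mult_left_mono\<close>)

lemma empty_in_hardcore: "{} \<in> hardcore \<delta>"
  unfolding hardcore_def locfin_def by auto

lemma Zf_pos: "0 < Zf H \<delta> \<theta> L"
proof -
  let ?T = "\<lambda>k. ennreal (exp (- measure lborel L) / fact k) *
      (\<integral>\<^sup>+ x. ennreal (exp (- H \<theta> L (x ` {..<k} \<inter> L))) *
         (if x ` {..<k} \<inter> L \<in> hardcore \<delta> then 1 else 0) \<partial>PiM {..<k} (\<lambda>_. restrict_space lborel L))"
  have "?T 0 = ennreal (exp (- measure lborel L)) * ennreal (exp (- H \<theta> L {}))"
    by (simp add: PiM_empty empty_in_hardcore)
  also have "\<dots> > 0" by (simp add: ennreal_mult''[symmetric] del: ennreal_mult'')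
  finally have "0 < ?T 0" .
  moreover have "?T 0 \<le> suminf ?T"
    using ennreal_suminf_lessD[of ?T "?T 0" 0] by (meson not_le order.irrefl)
  ultimately show ?thesis unfolding Zf_def pois_int_def by (meson order_less_le_trans)
qed

lemma Zc_empty: "Zc H \<delta> \<theta> \<Lambda> {} = Zf H \<delta> \<theta> \<Lambda>"
  unfolding Zc_def Zf_def by simp

lemma nn_integral_indicator_pos:
  assumes f: "f \<in> borel_measurable M" and B: "B \<in> sets M" "0 < emeasure M B"
    and pos: "\<And>x. x \<in> B \<Longrightarrow> 0 < f x"
  shows "0 < (\<integral>\<^sup>+ x. f x * indicator B x \<partial>M)"
proof (rule ccontr)
  assume "\<not> 0 < (\<integral>\<^sup>+ x. f x * indicator B x \<partial>M)"
  moreover have "(\<lambda>x. f x * indicator B x) \<in> borel_measurable M" using f B(1) by measurable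
  ultimately have "AE x in M. f x * indicator B x = 0" by (simp add: nn_integral_0_iff_AE)
  moreover have "x \<notin> B" if "f x * indicator B x = 0" for x
  proof
    assume "x \<in> B"
    with that pos[OF this] show False by simp
  qed
  ultimately have "AE x in M. x \<notin> B" by (rule eventually_mono)
  moreover have "{x \<in> space M. \<not> x \<notin> B} = B" using sets.sets_into_space[OF B(1)] by auto
  ultimately have "emeasure M B = 0" using AE_iff_measurable[OF B(1)] by simp
  with B(2) show False by simp
qed

section \<open>Strict monotonicity of the partition function\<close>

lemma Lam_bwin: "bwin (Lam n :: 'a::euclidean_space set)"
  unfolding bwin_def Lam_def by (simp add: bounded_cbox)

lemma Lam_0: "Lam 0 = {0}"
  unfolding Lam_def by simp

lemma mem_Lam_iff: "x \<in> Lam n \<longleftrightarrow> (\<forall>i\<in>Basis. \<bar>x \<bullet> i\<bar> \<le> real n)"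
  unfolding Lam_def mem_box by (auto simp: abs_le_iff)

lemma ball_scaleR_subset_Lam:
  fixes p :: "'a::euclidean_space"
  assumes p: "p \<in> Lam n" and s: "0 \<le> s" "s < 1"
  shows "ball (s *\<^sub>R p) (real n * (1 - s)) \<subseteq> Lam n"
proof
  fix x assume x: "x \<in> ball (s *\<^sub>R p) (real n * (1 - s))"
  show "x \<in> Lam n" unfolding mem_Lam_iff
  proof
    fix i :: 'a assume i: "i \<in> Basis"
    have "\<bar>(x - s *\<^sub>R p) \<bullet> i\<bar> \<le> norm (x - s *\<^sub>R p)" using i by (rule Basis_le_norm)
    also have "\<dots> < real n * (1 - s)" using x by (simp add: dist_norm norm_minus_commute)
    finally have 1: "\<bar>x \<bullet> i - s * (p \<bullet> i)\<bar> < real n * (1 - s)" by (simp add: inner_diff_left)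
    have "\<bar>p \<bullet> i\<bar> \<le> real n" using p i unfolding mem_Lam_iff by auto
    then have "\<bar>s * (p \<bullet> i)\<bar> \<le> s * real n" using s by (simp add: abs_mult mult_left_mono)
    then show "\<bar>x \<bullet> i\<bar> \<le> real n" using 1 by (simp add: algebra_simps)
  qed
qed

text \<open>Shrinking \<open>p\<close> and \<open>q\<close> towards the centre until their distance is the midpoint of
  \<open>(r\<^sub>0, r\<^sub>1)\<close> leaves room for small balls around both inside the window.\<close>

lemma balls_at_distance_between_in_Lam:
  fixes p q :: "'a::euclidean_space"
  assumes pq: "p \<in> Lam n" "q \<in> Lam n" and r: "0 \<le> r0" "r0 < r1" "r1 \<le> dist p q"
  obtains a b :: 'a and e where "0 < e" "ball a e \<subseteq> Lam n" "ball b e \<subseteq> Lam n"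
    "\<And>x y. x \<in> ball a e \<Longrightarrow> y \<in> ball b e \<Longrightarrow> r0 < dist x y \<and> dist x y < r1"
proof -
  define D where "D = dist p q"
  have D: "0 < D" using r unfolding D_def by linarith
  have "n \<noteq> 0"
  proof
    assume "n = 0"
    with pq have "p = q" by (simp add: Lam_0)
    with D show False unfolding D_def by simp
  qed
  define r where "r = (r0 + r1) / 2"
  define s where "s = r / D"
  have s: "0 < s" "s < 1" using r D unfolding s_def r_def D_def by (auto simp: field_simps)
  define e where "e = min ((r1 - r0) / 4) (real n * (1 - s))"
  have "e \<le> (r1 - r0) / 4" "e \<le> real n * (1 - s)"
    unfolding e_def by (simp_all only: min.cobounded1 min.cobounded2)
  moreover have "0 < e" using s r \<open>n \<noteq> 0\<close> unfolding e_def by simp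
  ultimately have e: "0 < e" "e \<le> real n * (1 - s)" "2 * e \<le> r - r0" "2 * e \<le> r1 - r"
    unfolding r_def by (auto simp: field_simps)
  define a b where "a = s *\<^sub>R p" and "b = s *\<^sub>R q"
  have dab: "dist a b = r"
  proof -
    have "dist a b = s * D"
      unfolding a_def b_def D_def dist_norm using s by (simp add: scaleR_diff_right[symmetric])
    then show ?thesis using D unfolding s_def by simp
  qed
  have balls: "ball (s *\<^sub>R x) e \<subseteq> Lam n" if "x \<in> Lam n" for x
  proof -
    have "ball (s *\<^sub>R x) e \<subseteq> ball (s *\<^sub>R x) (real n * (1 - s))" using e(2) by (rule subset_ball)
    also have "\<dots> \<subseteq> Lam n" by (rule ball_scaleR_subset_Lam[OF that]) (use s in auto)
    finally show ?thesis .
  qed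
  have "r0 < dist x y \<and> dist x y < r1" if "x \<in> ball a e" "y \<in> ball b e" for x y
  proof -
    have "dist a x < e" "dist b y < e" using that by simp_all
    moreover have "dist a b \<le> dist a x + dist x y + dist b y"
      using dist_triangle[of a b x] dist_triangle[of x b y] dist_commute[of y b] by linarith
    moreover have "dist x y \<le> dist a x + dist a b + dist b y"
      using dist_triangle[of x y a] dist_triangle[of a y b] dist_commute[of x a] by linarith
    ultimately show ?thesis using dab e(3,4) by linarith
  qed
  then show ?thesis using that[OF e(1) balls[OF pq(1)] balls[OF pq(2)]] unfolding a_def b_def by blast
qed

lemma emeasure_pairs_at_distance_between_pos:
  fixes p q :: "'a::euclidean_space"
  assumes pq: "p \<in> Lam n" "q \<in> Lam n" and r: "0 \<le> r0" "r0 < r1" "r1 \<le> dist p q"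
  defines "M \<equiv> PiM {..<2::nat} (\<lambda>_. restrict_space lborel (Lam n :: 'a set))"
  shows "0 < emeasure M {x \<in> space M. r0 < dist (x 0) (x 1) \<and> dist (x 0) (x 1) < r1}"
proof -
  obtain e and a b :: 'a where e: "0 < e" and ab: "ball a e \<subseteq> Lam n" "ball b e \<subseteq> Lam n"
    and dist: "\<And>x y. x \<in> ball a e \<Longrightarrow> y \<in> ball b e \<Longrightarrow> r0 < dist x y \<and> dist x y < r1"
    by (rule balls_at_distance_between_in_Lam[OF pq r]) blast
  define A where "A i = (if i = (0::nat) then ball a e else ball b e)" for i
  have Lam_sets: "Lam n \<in> sets lborel" using Lam_bwin unfolding bwin_def by blast
  interpret product_sigma_finite "\<lambda>_. restrict_space lborel (Lam n :: 'a set)"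
    by (intro product_sigma_finite.intro sigma_finite_measure_restrict_space sigma_finite_lborel
        Lam_sets)
  have ball_sets: "ball c e \<in> sets (restrict_space lborel (Lam n))" if "ball c e \<subseteq> Lam n" for c
    using that Lam_sets by (subst sets_restrict_space_iff) auto
  have ball_emeasure: "emeasure (restrict_space lborel (Lam n)) (ball c e) = emeasure lborel (ball c e)"
    if "ball c e \<subseteq> Lam n" for c
    using that Lam_sets by (intro emeasure_restrict_space) auto
  have two: "{..<2::nat} = {0, 1}" by auto
  have "emeasure M (PiE {..<2} A) = (\<Prod>i\<in>{..<2}. emeasure (restrict_space lborel (Lam n)) (A i))"
    unfolding M_def
    by (rule emeasure_PiM) (use ab in \<open>auto simp: A_def intro: ball_sets\<close>)
  also have "\<dots> = emeasure lborel (ball a e) * emeasure lborel (ball b e)"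
    unfolding two using ab by (simp add: A_def ball_emeasure)
  also have "\<dots> > 0" using e by (simp add: emeasure_ball ennreal_mult''[symmetric] del: ennreal_mult'')
  finally have "0 < emeasure M (PiE {..<2} A)" .
  also have "\<dots> \<le> emeasure M {x \<in> space M. r0 < dist (x 0) (x 1) \<and> dist (x 0) (x 1) < r1}"
  proof (rule emeasure_mono)
    have "PiE {..<2} A \<subseteq> PiE {..<2} (\<lambda>_. Lam n)" using ab by (intro PiE_mono) (auto simp: A_def)
    then have "PiE {..<2} A \<subseteq> space M" unfolding M_def by (simp add: space_PiM space_restrict_space)
    then show "PiE {..<2} A \<subseteq> {x \<in> space M. r0 < dist (x 0) (x 1) \<and> dist (x 0) (x 1) < r1}"
      using dist PiE_mem[of _ "{..<2}" A 0] PiE_mem[of _ "{..<2}" A 1] by (fastforce simp: A_def)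
    note [measurable] = measurable_component_restrict_lborel[of 0 "{..<2}" "Lam n"]
      measurable_component_restrict_lborel[of 1 "{..<2}" "Lam n"]
    show "{x \<in> space M. r0 < dist (x 0) (x 1) \<and> dist (x 0) (x 1) < r1} \<in> sets M"
      unfolding M_def by measurable
  qed
  finally show ?thesis .
qed

text \<open>Only the two-point term of the Poisson expansion is needed: raising the hardcore distance from
  \<open>\<delta>\<close> to \<open>\<delta>'\<close> removes the pairs at distance in \<open>(\<delta>, \<delta>')\<close>, a set of positive product measure.\<close>

lemma Zf_strict_antimono:
  fixes H :: "'p \<Rightarrow> 'a::euclidean_space set \<Rightarrow> 'a set \<Rightarrow> real" and p q :: 'a
  assumes H_meas: "H \<theta> (Lam n) \<in> borel_measurable (restrict_space config_space tempered)"
    and pq: "p \<in> Lam n" "q \<in> Lam n"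
    and \<delta>: "0 \<le> \<delta>" "\<delta> < \<delta>'" "\<delta>' \<le> ereal (dist p q)"
    and fin: "Zf H \<delta>' \<theta> (Lam n) < \<infinity>"
  shows "Zf H \<delta>' \<theta> (Lam n) < Zf H \<delta> \<theta> (Lam n)"
proof -
  define M where "M = PiM {..<2::nat} (\<lambda>_. restrict_space lborel (Lam n :: 'a set))"
  define F where "F d \<omega> = ennreal (exp (- H \<theta> (Lam n) (\<omega> \<inter> Lam n))) *
      (if \<omega> \<inter> Lam n \<in> hardcore d then 1 else 0)" for d \<omega>
  define w where "w x = ennreal (exp (- H \<theta> (Lam n) {x 0, x 1}))" for x :: "nat \<Rightarrow> 'a"
  obtain r0 r1 where r: "\<delta> = ereal r0" "\<delta>' = ereal r1" using \<delta> by (cases \<delta>; cases \<delta>') auto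
  define B where "B = {x \<in> space M. r0 < dist (x 0) (x 1) \<and> dist (x 0) (x 1) < r1}"
  have Zf: "Zf H d \<theta> (Lam n) = pois_int (Lam n) (F d)" for d unfolding Zf_def F_def ..
  note [measurable] = measurable_component_restrict_lborel[of 0 "{..<2}" "Lam n"]
    measurable_component_restrict_lborel[of 1 "{..<2}" "Lam n"]
  have [measurable]: "(\<lambda>x. H \<theta> (Lam n) {x 0, x 1}) \<in> borel_measurable M"
    unfolding M_def by (rule measurable_compose[OF measurable_doubleton_config H_meas])
  have [measurable]: "Measurable.pred M (\<lambda>x. x 0 = x 1)"
    unfolding pred_def M_def by (intro measurable_equality_set) measurable
  have [measurable]: "Measurable.pred M (\<lambda>x. d \<le> ereal (dist (x 0) (x 1)))" for d
    unfolding pred_def M_def by (intro borel_measurable_le measurable_const) measurable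
  have B_sets[measurable]: "B \<in> sets M" unfolding B_def M_def by measurable
  have F_pair: "F d (x ` {..<2}) = w x * (if x 0 = x 1 \<or> d \<le> ereal (dist (x 0) (x 1)) then 1 else 0)"
    if "x \<in> space M" for d x
  proof -
    have "x 0 \<in> Lam n" "x 1 \<in> Lam n"
      using that unfolding M_def by (auto simp: space_PiM space_restrict_space PiE_def Pi_def)
    moreover have "{..<2::nat} = {0, 1}" by auto
    ultimately have "x ` {..<2} \<inter> Lam n = {x 0, x 1}" by auto
    then show ?thesis by (simp only: F_def w_def doubleton_in_hardcore_iff)
  qed
  have w_meas[measurable]: "w \<in> borel_measurable M" unfolding w_def by measurable
  have [measurable]: "(\<lambda>x. F d (x ` {..<2})) \<in> borel_measurable M" for d
    by (rule measurable_cong[OF F_pair, THEN iffD2]) measurable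
  have gap: "F \<delta>' (x ` {..<2}) + w x * indicator B x \<le> F \<delta> (x ` {..<2})" if "x \<in> space M" for x
  proof (cases "x \<in> B")
    case True
    then have "r0 < dist (x 0) (x 1)" "dist (x 0) (x 1) < r1" unfolding B_def by auto
    then show ?thesis unfolding F_pair[OF that] using r \<delta>(1) True by auto
  next
    case False
    have "\<delta> \<le> ereal (dist (x 0) (x 1))" if "\<delta>' \<le> ereal (dist (x 0) (x 1))"
      using \<delta>(2) that by order
    with False show ?thesis unfolding F_pair[OF that] by auto
  qed
  have "0 < emeasure M B"
    unfolding B_def M_def using \<delta> r by (intro emeasure_pairs_at_distance_between_pos[OF pq]) auto
  then have pos: "0 < (\<integral>\<^sup>+ x. w x * indicator B x \<partial>M)"
    by (rule nn_integral_indicator_pos[OF w_meas B_sets]) (simp_all add: w_def)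
  have "(\<integral>\<^sup>+ x. F \<delta>' (x ` {..<2}) \<partial>M) + (\<integral>\<^sup>+ x. w x * indicator B x \<partial>M)
      = (\<integral>\<^sup>+ x. F \<delta>' (x ` {..<2}) + w x * indicator B x \<partial>M)"
    by (rule nn_integral_add[symmetric]) measurable
  also have "\<dots> \<le> (\<integral>\<^sup>+ x. F \<delta> (x ` {..<2}) \<partial>M)" by (intro nn_integral_mono gap)
  finally show ?thesis unfolding Zf
    using hardcore_antimono[OF order.strict_implies_order[OF \<delta>(2)]] fin pos
    by (intro pois_int_strict_mono[where k = 2]) (auto simp: F_def Zf M_def)
qed

section \<open>The contrast\<close>

lemma Lam_measure_pos: "1 \<le> n \<Longrightarrow> 0 < measure lborel (Lam n :: 'a::euclidean_space set)"
  unfolding Lam_def by (simp add: measure_lborel_cbox_eq inner_diff_left inner_add_left prod_pos)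

lemma two_le_cardE:
  assumes "2 \<le> card S"
  obtains p q where "p \<in> S" "q \<in> S" "p \<noteq> q"
proof -
  obtain a B where "S = insert a B" "a \<notin> B" "1 \<le> card B"
    using assms card_le_Suc_iff[of 1 S] by auto
  moreover from \<open>1 \<le> card B\<close> obtain b where "b \<in> B" by fastforce
  ultimately show thesis using that[of a b] by auto
qed

lemma mindist_le_dist: "p \<in> \<omega> \<inter> Lam n \<Longrightarrow> q \<in> \<omega> \<inter> Lam n \<Longrightarrow> p \<noteq> q \<Longrightarrow> mindist n \<omega> \<le> ereal (dist p q)"
  unfolding mindist_def by (auto intro!: Inf_lower)

lemma le_mindist_if_hardcore: "\<omega> \<in> hardcore \<delta> \<Longrightarrow> \<delta> \<le> mindist n \<omega>"
  unfolding mindist_def hardcore_def by (auto intro!: Inf_greatest)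

lemma delta_hat_greatest:
  assumes "dmin \<le> mindist n \<omega>" "dmin \<le> dmax"
  shows "delta_hat dmin dmax n \<omega> \<in> {dmin..dmax}"
    and "delta_hat dmin dmax n \<omega> \<le> mindist n \<omega>"
    and "\<delta> \<in> {dmin..dmax} \<Longrightarrow> \<delta> \<le> mindist n \<omega> \<Longrightarrow> \<delta> \<le> delta_hat dmin dmax n \<omega>"
  using assms unfolding delta_hat_def by auto

lemma contrast_above_mindist: "mindist n \<omega> < \<delta> \<Longrightarrow> contrast H n \<delta> \<theta> \<omega> = \<infinity>"
  unfolding contrast_def by simp

lemma contrast_below_mindist:
  fixes H :: "'p \<Rightarrow> 'a::euclidean_space set \<Rightarrow> 'a set \<Rightarrow> real" and \<omega> :: "'a set"
  shows "\<delta> \<le> mindist n \<omega> \<Longrightarrow> contrast H n \<delta> \<theta> \<omega> =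
     ereal (ln (enn2real (Zf H \<delta> \<theta> (Lam n))) / measure lborel (Lam n :: 'a::euclidean_space set)
       + H \<theta> (Lam n) (\<omega> \<inter> Lam n) / measure lborel (Lam n :: 'a set))"
  unfolding contrast_def by (simp add: not_less)

lemma ln_enn2real_mono: "0 < a \<Longrightarrow> a \<le> b \<Longrightarrow> b < \<infinity> \<Longrightarrow> ln (enn2real a) \<le> ln (enn2real b)"
  by (simp add: enn2real_mono enn2real_positive_iff)

lemma ln_enn2real_strict_mono: "0 < a \<Longrightarrow> a < b \<Longrightarrow> b < \<infinity> \<Longrightarrow> ln (enn2real a) < ln (enn2real b)"
proof -
  assume a: "0 < a" and ab: "a < b" and b: "b < \<infinity>"
  then have "a < top" by simp
  with ab b have "enn2real a < enn2real b" by simp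
  moreover have "0 < enn2real a" using a \<open>a < top\<close> by (simp add: enn2real_positive_iff)
  ultimately show ?thesis by simp
qed

lemma contrast_antimono:
  fixes H :: "'p \<Rightarrow> 'a::euclidean_space set \<Rightarrow> 'a set \<Rightarrow> real" and \<omega> :: "'a set"
  assumes n: "1 \<le> n" and \<delta>: "\<delta> \<le> \<delta>'" "\<delta>' \<le> mindist n \<omega>" and fin: "Zf H \<delta> \<theta> (Lam n) < \<infinity>"
  shows "contrast H n \<delta>' \<theta> \<omega> \<le> contrast H n \<delta> \<theta> \<omega>"
proof -
  have "ln (enn2real (Zf H \<delta>' \<theta> (Lam n))) \<le> ln (enn2real (Zf H \<delta> \<theta> (Lam n)))"
    using Zf_pos Zf_antimono[OF \<delta>(1)] fin by (rule ln_enn2real_mono)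
  then have "ln (enn2real (Zf H \<delta>' \<theta> (Lam n))) / measure lborel (Lam n :: 'a set)
      \<le> ln (enn2real (Zf H \<delta> \<theta> (Lam n))) / measure lborel (Lam n :: 'a set)"
    using Lam_measure_pos[OF n] by (intro divide_right_mono) auto
  moreover have "\<delta> \<le> mindist n \<omega>" using \<delta> by order
  ultimately show ?thesis using \<delta>(2) by (simp add: contrast_below_mindist)
qed

lemma contrast_strict_antimono:
  fixes H :: "'p \<Rightarrow> 'a::euclidean_space set \<Rightarrow> 'a set \<Rightarrow> real" and \<omega> :: "'a set"
  assumes n: "1 \<le> n" and H_meas: "H \<theta> (Lam n) \<in> borel_measurable (restrict_space config_space tempered)"
    and two: "2 \<le> card (\<omega> \<inter> Lam n)"
    and \<delta>: "0 \<le> \<delta>" "\<delta> < \<delta>'" "\<delta>' \<le> mindist n \<omega>" and fin: "Zf H \<delta> \<theta> (Lam n) < \<infinity>"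
  shows "contrast H n \<delta>' \<theta> \<omega> < contrast H n \<delta> \<theta> \<omega>"
proof -
  obtain p q where pq: "p \<in> \<omega> \<inter> Lam n" "q \<in> \<omega> \<inter> Lam n" "p \<noteq> q" using two by (rule two_le_cardE)
  have "\<delta>' \<le> ereal (dist p q)" using \<delta>(3) mindist_le_dist[OF pq] by order
  moreover have "Zf H \<delta>' \<theta> (Lam n) < \<infinity>"
    using Zf_antimono[OF order.strict_implies_order[OF \<delta>(2)], where H = H and \<theta> = \<theta> and L = "Lam n"] fin
    by simp
  ultimately have "Zf H \<delta>' \<theta> (Lam n) < Zf H \<delta> \<theta> (Lam n)"
    using pq \<delta>(1,2) by (intro Zf_strict_antimono[where H = H and \<theta> = \<theta> and n = n, OF H_meas]) auto
  then have "ln (enn2real (Zf H \<delta>' \<theta> (Lam n))) < ln (enn2real (Zf H \<delta> \<theta> (Lam n)))"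
    by (rule ln_enn2real_strict_mono[OF Zf_pos _ fin])
  then have "ln (enn2real (Zf H \<delta>' \<theta> (Lam n))) / measure lborel (Lam n :: 'a set)
      < ln (enn2real (Zf H \<delta> \<theta> (Lam n))) / measure lborel (Lam n :: 'a set)"
    using Lam_measure_pos[OF n] by (intro divide_strict_right_mono) auto
  moreover have "\<delta> \<le> mindist n \<omega>" using \<delta> by order
  ultimately show ?thesis using \<delta>(3) by (simp add: contrast_below_mindist)
qed

lemma contrast_delta_hat_le:
  fixes H :: "'p \<Rightarrow> 'a::euclidean_space set \<Rightarrow> 'a set \<Rightarrow> real" and \<omega> :: "'a set"
  assumes n: "1 \<le> n" and md: "dmin \<le> mindist n \<omega>" "dmin \<le> dmax"
    and \<delta>: "\<delta> \<in> {dmin..dmax}" and fin: "Zf H \<delta> \<theta> (Lam n) < \<infinity>"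
  shows "contrast H n (delta_hat dmin dmax n \<omega>) \<theta> \<omega> \<le> contrast H n \<delta> \<theta> \<omega>"
proof (cases "mindist n \<omega> < \<delta>")
  case True
  then show ?thesis by (simp add: contrast_above_mindist)
next
  case False
  then show ?thesis
    using delta_hat_greatest[OF md] \<delta> by (intro contrast_antimono[OF n _ _ fin]) auto
qed

lemma delta_hat_unique_minimiser:
  fixes H :: "'p \<Rightarrow> 'a::euclidean_space set \<Rightarrow> 'a set \<Rightarrow> real" and \<omega> :: "'a set"
  assumes n: "1 \<le> n" and md: "dmin \<le> mindist n \<omega>" "dmin \<le> dmax" and "0 \<le> dmin"
    and H_meas: "H \<theta> (Lam n) \<in> borel_measurable (restrict_space config_space tempered)"
    and two: "2 \<le> card (\<omega> \<inter> Lam n)"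
    and \<delta>: "\<delta> \<in> {dmin..dmax}" and fin: "Zf H \<delta> \<theta> (Lam n) < \<infinity>"
    and min: "contrast H n \<delta> \<theta> \<omega> \<le> contrast H n (delta_hat dmin dmax n \<omega>) \<theta> \<omega>"
  shows "\<delta> = delta_hat dmin dmax n \<omega>"
proof -
  note dh = delta_hat_greatest[OF md]
  have "\<delta> \<le> mindist n \<omega>"
  proof (rule ccontr)
    assume "\<not> \<delta> \<le> mindist n \<omega>"
    then have "contrast H n \<delta> \<theta> \<omega> = \<infinity>" by (simp add: contrast_above_mindist)
    with min dh(2) show False by (simp add: contrast_below_mindist)
  qed
  then have "\<delta> \<le> delta_hat dmin dmax n \<omega>" using dh(3) \<delta> by blast
  moreover have "\<not> \<delta> < delta_hat dmin dmax n \<omega>"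
    using contrast_strict_antimono[OF n H_meas two _ _ dh(2) fin] min \<delta> \<open>0 \<le> dmin\<close> by force
  ultimately show ?thesis by simp
qed

lemma delta_hat_mle:
  fixes H :: "'p \<Rightarrow> 'a::euclidean_space set \<Rightarrow> 'a set \<Rightarrow> real" and \<omega> :: "'a set"
  assumes n: "1 \<le> n" and I: "0 \<le> dmin" "dmin \<le> dmax" and md: "dmin \<le> mindist n \<omega>"
    and H_meas: "\<And>\<theta>. \<theta> \<in> Kc \<Longrightarrow> H \<theta> (Lam n) \<in> borel_measurable (restrict_space config_space tempered)"
    and fin: "\<And>\<delta> \<theta>. \<delta> \<in> {dmin..dmax} \<Longrightarrow> \<theta> \<in> Kc \<Longrightarrow> Zf H \<delta> \<theta> (Lam n) < \<infinity>"
  shows "(\<forall>\<theta>\<in>Kc. \<forall>\<delta>\<in>{dmin..dmax}.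
      contrast H n (delta_hat dmin dmax n \<omega>) \<theta> \<omega> \<le> contrast H n \<delta> \<theta> \<omega>) \<and>
   (\<forall>\<theta>\<in>Kc.
      (\<forall>\<delta>\<in>{dmin..dmax}. \<forall>\<theta>'\<in>Kc.
         contrast H n (delta_hat dmin dmax n \<omega>) \<theta> \<omega> \<le> contrast H n \<delta> \<theta>' \<omega>)
      \<longleftrightarrow> (\<forall>\<theta>'\<in>Kc.
         contrast H n (delta_hat dmin dmax n \<omega>) \<theta> \<omega>
           \<le> contrast H n (delta_hat dmin dmax n \<omega>) \<theta>' \<omega>)) \<and>
   (2 \<le> card (\<omega> \<inter> Lam n) \<longrightarrow>
      (\<forall>\<delta>\<in>{dmin..dmax}. \<forall>\<theta>\<in>Kc.
         (\<forall>\<delta>'\<in>{dmin..dmax}. \<forall>\<theta>'\<in>Kc. contrast H n \<delta> \<theta> \<omega> \<le> contrast H n \<delta>' \<theta>' \<omega>)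
         \<longrightarrow> \<delta> = delta_hat dmin dmax n \<omega>))"
  using contrast_delta_hat_le[OF n md I(2) _ fin] delta_hat_greatest(1)[OF md I(2)]
    delta_hat_unique_minimiser[OF n md I(2,1) H_meas _ _ fin]
  by (blast intro: order_trans)

theorem lemma1:
  fixes H :: "'p::euclidean_space \<Rightarrow> 'a::euclidean_space set \<Rightarrow> 'a set \<Rightarrow> real"
    and dmin dmax dstar :: ereal
    and \<Theta> Kc :: "'p set"
    and \<theta>star :: 'p
    and P :: "'a set measure"
  assumes I: "0 \<le> dmin" "dmin \<le> dmax"
    and Theta: "\<Theta> \<noteq> {}" and Kc: "compact Kc" "Kc \<subseteq> \<Theta>"
    and H_meas: "\<And>\<theta> \<Lambda>. \<theta> \<in> \<Theta> \<Longrightarrow> bwin \<Lambda> \<Longrightarrow>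
        H \<theta> \<Lambda> \<in> borel_measurable (restrict_space config_space tempered)"
    and H_comp: "\<And>\<theta> \<Lambda> \<Lambda>'. \<theta> \<in> \<Theta> \<Longrightarrow> bwin \<Lambda> \<Longrightarrow> bwin \<Lambda>' \<Longrightarrow> \<Lambda> \<subseteq> \<Lambda>' \<Longrightarrow>
        \<exists>\<phi>. \<forall>\<omega>\<in>tempered. H \<theta> \<Lambda>' \<omega> = H \<theta> \<Lambda> \<omega> + \<phi> (\<omega> - \<Lambda>)"
    and Exist_Z: "\<And>\<delta> \<theta> \<Lambda> \<omega>. \<delta> \<in> {dmin..dmax} \<Longrightarrow> \<theta> \<in> \<Theta> \<Longrightarrow> bwin \<Lambda> \<Longrightarrow>
        \<omega> \<in> hardcore \<delta> \<inter> tempered \<Longrightarrow> Zc H \<delta> \<theta> \<Lambda> \<omega> < \<infinity>"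
    and Exist_G: "\<And>\<delta> \<theta>. \<delta> \<in> {dmin..dmax} \<Longrightarrow> \<theta> \<in> \<Theta> \<Longrightarrow> Gibbs H \<delta> \<theta> \<noteq> {}"
    and star: "dstar \<in> {dmin..dmax}" "\<theta>star \<in> Kc"
    and P: "P \<in> Gibbs H dstar \<theta>star"
  shows "AE \<omega> in P. \<forall>n\<ge>1.
     (\<forall>\<theta>\<in>Kc. \<forall>\<delta>\<in>{dmin..dmax}.
        contrast H n (delta_hat dmin dmax n \<omega>) \<theta> \<omega> \<le> contrast H n \<delta> \<theta> \<omega>) \<and>
     (\<forall>\<theta>\<in>Kc.
        (\<forall>\<delta>\<in>{dmin..dmax}. \<forall>\<theta>'\<in>Kc.
           contrast H n (delta_hat dmin dmax n \<omega>) \<theta> \<omega> \<le> contrast H n \<delta> \<theta>' \<omega>)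
        \<longleftrightarrow> (\<forall>\<theta>'\<in>Kc.
           contrast H n (delta_hat dmin dmax n \<omega>) \<theta> \<omega>
             \<le> contrast H n (delta_hat dmin dmax n \<omega>) \<theta>' \<omega>)) \<and>
     (2 \<le> card (\<omega> \<inter> Lam n) \<longrightarrow>
        (\<forall>\<delta>\<in>{dmin..dmax}. \<forall>\<theta>\<in>Kc.
           (\<forall>\<delta>'\<in>{dmin..dmax}. \<forall>\<theta>'\<in>Kc. contrast H n \<delta> \<theta> \<omega> \<le> contrast H n \<delta>' \<theta>' \<omega>)
           \<longrightarrow> \<delta> = delta_hat dmin dmax n \<omega>))"
proof -
  have md: "dmin \<le> mindist n \<omega>" if "\<omega> \<in> hardcore dstar" for \<omega> n
    using star(1) le_mindist_if_hardcore[OF that, of n] by (meson atLeastAtMost_iff order_trans)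
  have H_meas_Lam: "H \<theta> (Lam n) \<in> borel_measurable (restrict_space config_space tempered)"
    if "\<theta> \<in> Kc" for \<theta> n
    using H_meas Kc(2) that Lam_bwin by blast
  have fin: "Zf H \<delta> \<theta> (Lam n) < \<infinity>" if "\<delta> \<in> {dmin..dmax}" "\<theta> \<in> Kc" for \<delta> \<theta> n
    using Exist_Z[OF that(1), of \<theta> "Lam n" "{}"] that(2) Kc(2)
    by (auto simp: Zc_empty Lam_bwin empty_in_hardcore finite_imp_tempered)
  have "AE \<omega> in P. \<omega> \<in> hardcore dstar" using P unfolding Gibbs_def by auto
  then show ?thesis
    by (rule AE_mp) (intro AE_I2 impI allI delta_hat_mle[OF _ I md H_meas_Lam fin])
qed

end
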